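(* Let $\mu:so_3(K)^{\oplus5}\to so_3(K)^{\oplus3}\oplus M_3(K)$, $(a_1,a_2,a_3,a_4,a_5)\mapsto(a_1,a_2,a_3,a_4a_5)$. Its comorphism $\mu^*$ restricts to an isomorphism of $\mathrm{GL}_3(K)$-modules \[\mu^*:\big(K[T_3,Z]^{\mathrm{SO}_3(K)}\big)^{(\mathbb N_0,\mathbb N_0,\mathbb N_0,1)}\xrightarrow{\ \cong\ }\big(K[T_5]^{\mathrm{SO}_3(K)}\big)^{(\mathbb N_0,\mathbb N_0,\mathbb N_0,1,1)}.\]
   Context: $K$ is a field of characteristic $0$; $so_3(K)$ is the space of $3\times3$ skew-symmetric matrices. $K[T_p]$, $T_p=\{t^{(k)}_{ij}\mid 1\le i<j\le3,\ 1\le k\le p\}$, is the coordinate ring of $so_3(K)^{\oplus p}$, and $K[T_3,Z]$, $Z=\{z_{ij}\mid1\le i,j\le3\}$, that of $so_3(K)^{\oplus3}\oplus M_3(K)$; $\mathrm{SO}_3(K)$ acts on all these spaces by simultaneous conjugation. $(K[T_3,Z]^{\mathrm{SO}_3(K)})^{(\mathbb N_0,\mathbb N_0,\mathbb N_0,1)}$ denotes the invariants of degree one in the $z_{ij}$, and $(K[T_5]^{\mathrm{SO}_3(K)})^{(\mathbb N_0,\mathbb N_0,\mathbb N_0,1,1)}$ the invariants of degree one in the entries of the fourth and of the fifth component. $\mathrm{GL}_p(K)$ acts on $K[T_p]$ by $g\cdot t^{(k)}_{ij}=\sum_l g_{lk}t^{(l)}_{ij}$; $\mathrm{GL}_3(K)$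 acts on $K[T_3,Z]$ this way fixing the $z_{ij}$, and on $K[T_5]$ via the embedding $g\mapsto\mathrm{diag}(g,1,1)$ of $\mathrm{GL}_3(K)$ into $\mathrm{GL}_5(K)$. *)

theory Defs
  imports "HOL-Library.Poly_Mapping" "Jordan_Normal_Form.Determinant"
begin

text \<open>A polynomial over K in variables of type 'v is a finitely supported map from
monomials (finitely supported exponent vectors 'v \<Rightarrow>0 nat) to coefficients.\<close>

type_synonym ('v, 'k) mpoly = "('v \<Rightarrow>\<^sub>0 nat) \<Rightarrow>\<^sub>0 'k"

definition PVar :: "'v \<Rightarrow> ('v, 'k::comm_ring_1) mpoly" where
  "PVar v = Poly_Mapping.single (Poly_Mapping.single v 1) 1"

definition PConst :: "'k::comm_ring_1 \<Rightarrow> ('v, 'k) mpoly" where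
  "PConst c = Poly_Mapping.single 0 c"

text \<open>K-algebra homomorphism determined by images of the variables (substitution);
this is how comorphisms and the induced actions on coordinate rings are given.\<close>
definition psubst :: "('v \<Rightarrow> ('w, 'k::comm_ring_1) mpoly) \<Rightarrow> ('v, 'k) mpoly \<Rightarrow> ('w, 'k) mpoly" where
  "psubst \<sigma> p = (\<Sum>m\<in>Poly_Mapping.keys p.
      PConst (Poly_Mapping.lookup p m) * (\<Prod>v\<in>Poly_Mapping.keys m. \<sigma> v ^ Poly_Mapping.lookup m v))"

definition poly_in :: "'v set \<Rightarrow> ('v, 'k::zero) mpoly \<Rightarrow> bool" where
  "poly_in V p \<longleftrightarrow> (\<forall>m\<in>Poly_Mapping.keys p. Poly_Mapping.keys m \<subseteq> V)"

definition deg_in :: "'v set \<Rightarrow> ('v \<Rightarrow>\<^sub>0 nat) \<Rightarrow> nat" where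
  "deg_in S m = (\<Sum>v\<in>Poly_Mapping.keys m \<inter> S. Poly_Mapping.lookup m v)"

text \<open>Indices are 0-based: TV k i j is the coordinate t^(k+1)_{(i+1)(j+1)} (used with i<j<3),
ZV i j is the coordinate z_{(i+1)(j+1)}.\<close>
datatype var = TV nat nat nat | ZV nat nat

definition Tvars :: "nat \<Rightarrow> var set" where
  "Tvars p = {TV k i j | k i j. k < p \<and> i < j \<and> j < 3}"

definition Zvars :: "var set" where
  "Zvars = {ZV i j | i j. i < 3 \<and> j < 3}"

definition comp_vars :: "nat \<Rightarrow> var set" where
  "comp_vars k = {TV k i j | i j. i < j \<and> j < 3}"

definition gen_skew :: "nat \<Rightarrow> (var, 'k::comm_ring_1) mpoly mat" where
  "gen_skew k = mat 3 3 (\<lambda>(i,j). if i < j then PVar (TV k i j)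
                                  else if j < i then - PVar (TV k j i) else 0)"

definition gen_Z :: "(var, 'k::comm_ring_1) mpoly mat" where
  "gen_Z = mat 3 3 (\<lambda>(i,j). PVar (ZV i j))"

definition SO3 :: "'k::comm_ring_1 mat set" where
  "SO3 = {g \<in> carrier_mat 3 3. transpose_mat g * g = 1\<^sub>m 3 \<and> det g = 1}"

definition GL3 :: "'k::comm_ring_1 mat set" where
  "GL3 = {g \<in> carrier_mat 3 3. det g \<noteq> 0}"

text \<open>Action of g in SO3 on coordinate rings: (g.f)(x) = f(g^{-1} x g), g^{-1} = g^T,
componentwise on all summands (skew components and the M_3 component).\<close>
definition so_act :: "'k::comm_ring_1 mat \<Rightarrow> (var, 'k) mpoly \<Rightarrow> (var, 'k) mpoly" where
  "so_act g = psubst (\<lambda>v. let G = map_mat PConst g in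
      (case v of TV k i j \<Rightarrow> (transpose_mat G * gen_skew k * G) $$ (i,j)
               | ZV i j \<Rightarrow> (transpose_mat G * gen_Z * G) $$ (i,j)))"

definition so_invariant :: "(var, 'k::comm_ring_1) mpoly \<Rightarrow> bool" where
  "so_invariant p \<longleftrightarrow> (\<forall>g\<in>SO3. so_act g p = p)"

text \<open>GL_3 action: g.t^(k)_ij = sum_l g_lk t^(l)_ij for the first three components;
the z_ij and the components 4,5 (i.e. via diag(g,1,1)) are fixed.\<close>
definition gl_act :: "'k::comm_ring_1 mat \<Rightarrow> (var, 'k) mpoly \<Rightarrow> (var, 'k) mpoly" where
  "gl_act g = psubst (\<lambda>v. case v of
        TV k i j \<Rightarrow> (if k < 3 then (\<Sum>l<3. PConst (g $$ (l,k)) * PVar (TV l i j)) else PVar v)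
      | ZV i j \<Rightarrow> PVar v)"

definition inv_TZ_deg1 :: "(var, 'k::comm_ring_1) mpoly set" where
  "inv_TZ_deg1 = {p. poly_in (Tvars 3 \<union> Zvars) p \<and> so_invariant p \<and>
                      (\<forall>m\<in>Poly_Mapping.keys p. deg_in Zvars m = 1)}"

definition inv_T5_deg11 :: "(var, 'k::comm_ring_1) mpoly set" where
  "inv_T5_deg11 = {p. poly_in (Tvars 5) p \<and> so_invariant p \<and>
                      (\<forall>m\<in>Poly_Mapping.keys p. deg_in (comp_vars 3) m = 1 \<and> deg_in (comp_vars 4) m = 1)}"

text \<open>Comorphism of mu(a1,...,a5) = (a1,a2,a3,a4 a5): f \<mapsto> f \<circ> mu.\<close>
definition mu_star :: "(var, 'k::comm_ring_1) mpoly \<Rightarrow> (var, 'k) mpoly" where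
  "mu_star = psubst (\<lambda>v. case v of
        TV k i j \<Rightarrow> (if k < 3 then PVar v else 0)
      | ZV i j \<Rightarrow> (gen_skew 3 * gen_skew 4) $$ (i,j))"

end

theory Submission
  imports Defs
begin

(* All three maps are polynomial substitutions, so everything reduces to identities for the images of
   the variables. Writing X and Y for the generic skew-symmetric matrices of the fourth and fifth
   component, mu_star substitutes z_ij := (X Y)_ij. The nine entries of X Y are linearly independent
   bilinear forms in the three coordinates of X and the three of Y, so every product x_ab y_cd is a linear
   form in the z_ij; replacing these products monomial by monomial gives an explicit inverse of mu_star
   from the polynomials of bidegree (1,1) in X, Y onto those of degree one in Z. Because
   (H^T X H)(H^T Y H) = H^T X Y H for H in SO_3, and GL_3 only mixes the first three components, mu_star
   commutes with both actions; a bijection commuting with the SO_3-action restricts to a bijection of the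
   invariants, and GL_3 preserves invariants because its action commutes with that of SO_3. *)

lemma bij_betw_fixed_points:
  assumes "bij_betw f A B" "\<And>g x. g \<in> G \<Longrightarrow> x \<in> A \<Longrightarrow> act g x \<in> A"
    and "\<And>g x. g \<in> G \<Longrightarrow> x \<in> A \<Longrightarrow> f (act g x) = act' g (f x)"
  shows "bij_betw f {x \<in> A. \<forall>g\<in>G. act g x = x} {y \<in> B. \<forall>g\<in>G. act' g y = y}"
  unfolding bij_betw_def
proof
  show "inj_on f {x \<in> A. \<forall>g\<in>G. act g x = x}"
    using assms(1) by (auto simp: bij_betw_def intro: inj_on_subset)
  show "f ` {x \<in> A. \<forall>g\<in>G. act g x = x} = {y \<in> B. \<forall>g\<in>G. act' g y = y}"
  proof (intro equalityI subsetI)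
    fix y assume "y \<in> f ` {x \<in> A. \<forall>g\<in>G. act g x = x}"
    then show "y \<in> {y \<in> B. \<forall>g\<in>G. act' g y = y}"
      using assms by (auto simp: bij_betw_def simp flip: assms(3))
  next
    fix y assume y: "y \<in> {y \<in> B. \<forall>g\<in>G. act' g y = y}"
    then obtain x where x: "x \<in> A" "y = f x"
      using assms(1) by (auto simp: bij_betw_def)
    have "act g x = x" if "g \<in> G" for g
    proof -
      have "f (act g x) = f x"
        using that x y assms(3) by auto
      then show ?thesis
        using assms(1,2) that x(1) by (auto simp: bij_betw_def dest: inj_onD)
    qed
    with x show "y \<in> f ` {x \<in> A. \<forall>g\<in>G. act g x = x}"
      by blast
  qed
qed

section \<open>Polynomial substitution\<close>

interpretation PConst: comm_ring_hom "PConst :: 'k::comm_ring_1 \<Rightarrow> ('v, 'k) mpoly"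
  by unfold_locales (simp_all add: PConst_def single_add mult_single)

lemma poly_mapping_sum_single:
  "(p :: 'a \<Rightarrow>\<^sub>0 'b::comm_monoid_add) = (\<Sum>m\<in>Poly_Mapping.keys p. Poly_Mapping.single m (Poly_Mapping.lookup p m))"
  by (rule poly_mapping_eqI) (auto simp: lookup_sum lookup_single when_def in_keys_iff
      intro: sum.neutral elim!: sum.delta_remove)

lemma mpoly_mult_expand:
  "(p :: ('v, 'k::comm_ring_1) mpoly) * q = (\<Sum>a\<in>Poly_Mapping.keys p. \<Sum>b\<in>Poly_Mapping.keys q.
     Poly_Mapping.single (a + b) (Poly_Mapping.lookup p a * Poly_Mapping.lookup q b))"
  by (subst (1 2) poly_mapping_sum_single) (simp add: sum_product mult_single)

definition lin_extend :: "(('v \<Rightarrow>\<^sub>0 nat) \<Rightarrow> ('w, 'k) mpoly) \<Rightarrow> ('v, 'k) mpoly \<Rightarrow> ('w, 'k::comm_ring_1) mpoly" where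
  "lin_extend N p = (\<Sum>m\<in>Poly_Mapping.keys p. PConst (Poly_Mapping.lookup p m) * N m)"

lemma lin_extend_add: "lin_extend N (p + q) = lin_extend N p + lin_extend N q"
  unfolding lin_extend_def by (rule setsum_keys_plus_distrib) (simp_all add: PConst.hom_add distrib_right)

lemma lin_extend_zero [simp]: "lin_extend N 0 = 0"
  by (simp add: lin_extend_def)

lemma lin_extend_single: "lin_extend N (Poly_Mapping.single m c) = PConst c * N m"
  by (simp add: lin_extend_def)

lemma lin_extend_sum: "lin_extend N (sum f A) = (\<Sum>a\<in>A. lin_extend N (f a))"
  by (induction A rule: infinite_finite_induct) (simp_all add: lin_extend_add)

lemma lin_extend_uminus: "lin_extend N (- p) = - lin_extend N p"
  by (metis add_eq_0_iff lin_extend_add lin_extend_zero)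

lemma lin_extend_diff: "lin_extend N (p - q) = lin_extend N p - lin_extend N q"
  using lin_extend_add[of N p "- q"] by (simp add: lin_extend_uminus)

lemma lin_extend_PConst_mult: "lin_extend N (PConst c * p) = PConst c * lin_extend N p"
proof -
  have "PConst c * p = (\<Sum>m\<in>Poly_Mapping.keys p. Poly_Mapping.single m (c * Poly_Mapping.lookup p m))"
    by (subst poly_mapping_sum_single) (simp add: sum_distrib_left PConst_def mult_single)
  then have "lin_extend N (PConst c * p) = (\<Sum>m\<in>Poly_Mapping.keys p. PConst (c * Poly_Mapping.lookup p m) * N m)"
    by (simp only: lin_extend_sum lin_extend_single)
  then show ?thesis
    by (simp add: lin_extend_def sum_distrib_left PConst.hom_mult mult.assoc)
qed

lemma lin_extend_single_one: "lin_extend (\<lambda>m. Poly_Mapping.single m 1) p = p"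
  by (simp add: lin_extend_def PConst_def mult_single flip: poly_mapping_sum_single)

lemma lin_extend_eq_self:
  assumes "\<And>m. m \<in> Poly_Mapping.keys p \<Longrightarrow> N m = Poly_Mapping.single m 1"
  shows "lin_extend N p = p"
proof -
  have "lin_extend N p = lin_extend (\<lambda>m. Poly_Mapping.single m 1) p"
    using assms by (simp add: lin_extend_def)
  then show ?thesis
    by (simp add: lin_extend_single_one)
qed

lemma lin_extend_mult:
  assumes "\<And>a b. N (a + b) = N a * N b"
  shows "lin_extend N (p * q) = lin_extend N p * lin_extend N q"
proof -
  have "lin_extend N (p * q) = (\<Sum>a\<in>Poly_Mapping.keys p. \<Sum>b\<in>Poly_Mapping.keys q.
      PConst (Poly_Mapping.lookup p a * Poly_Mapping.lookup q b) * N (a + b))"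
    by (subst mpoly_mult_expand) (simp only: lin_extend_sum lin_extend_single)
  then show ?thesis
    by (simp add: lin_extend_def sum_product assms PConst.hom_mult mult_ac)
qed

lemma lin_extend_lin_extend: "lin_extend N (lin_extend M p) = lin_extend (\<lambda>m. lin_extend N (M m)) p"
  by (simp add: lin_extend_def [of M] lin_extend_def [of "\<lambda>m. lin_extend N (M m)"] lin_extend_sum
      lin_extend_PConst_mult)

definition subst_monom :: "('v \<Rightarrow> ('w, 'k) mpoly) \<Rightarrow> ('v \<Rightarrow>\<^sub>0 nat) \<Rightarrow> ('w, 'k::comm_ring_1) mpoly" where
  "subst_monom \<sigma> m = (\<Prod>v\<in>Poly_Mapping.keys m. \<sigma> v ^ Poly_Mapping.lookup m v)"

lemma subst_monom_superset:
  assumes "finite S" "Poly_Mapping.keys m \<subseteq> S"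
  shows "subst_monom \<sigma> m = (\<Prod>v\<in>S. \<sigma> v ^ Poly_Mapping.lookup m v)"
  unfolding subst_monom_def
  by (rule prod.mono_neutral_left) (use assms in \<open>auto simp: in_keys_iff\<close>)

lemma subst_monom_add: "subst_monom \<sigma> (m + n) = subst_monom \<sigma> m * subst_monom \<sigma> n"
proof -
  let ?S = "Poly_Mapping.keys m \<union> Poly_Mapping.keys n"
  have "subst_monom \<sigma> (m + n) = (\<Prod>v\<in>?S. \<sigma> v ^ Poly_Mapping.lookup m v * \<sigma> v ^ Poly_Mapping.lookup n v)"
    by (subst subst_monom_superset[of ?S]) (auto simp: keys_add lookup_add power_add)
  then show ?thesis
    by (simp add: prod.distrib subst_monom_superset[of ?S])
qed

lemma subst_monom_zero [simp]: "subst_monom \<sigma> 0 = 1"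
  by (simp add: subst_monom_def)

lemma subst_monom_single: "subst_monom \<sigma> (Poly_Mapping.single v n) = \<sigma> v ^ n"
  by (cases "n = 0") (simp_all add: subst_monom_def)

lemma subst_monom_cong: "(\<And>v. v \<in> Poly_Mapping.keys m \<Longrightarrow> \<sigma> v = \<tau> v) \<Longrightarrow> subst_monom \<sigma> m = subst_monom \<tau> m"
  unfolding subst_monom_def by (rule prod.cong) auto

lemma PVar_power: "PVar v ^ n = Poly_Mapping.single (Poly_Mapping.single v n) 1"
  by (induction n) (simp_all add: PVar_def mult_single add.commute flip: single_add)

lemma prod_single_one:
  "(\<Prod>a\<in>A. Poly_Mapping.single (f a) (1::'k::comm_semiring_1)) = Poly_Mapping.single (sum f A) 1"
  by (induction A rule: infinite_finite_induct) (simp_all add: mult_single)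

lemma subst_monom_PVar: "subst_monom PVar m = (Poly_Mapping.single m 1 :: ('v, 'k::comm_ring_1) mpoly)"
proof -
  have "subst_monom PVar m = (\<Prod>v\<in>Poly_Mapping.keys m. Poly_Mapping.single (Poly_Mapping.single v (Poly_Mapping.lookup m v)) (1::'k))"
    by (simp add: subst_monom_def PVar_power)
  also have "\<dots> = Poly_Mapping.single (\<Sum>v\<in>Poly_Mapping.keys m. Poly_Mapping.single v (Poly_Mapping.lookup m v)) 1"
    by (rule prod_single_one)
  finally show ?thesis
    by (simp flip: poly_mapping_sum_single)
qed

lemma subst_monom_fixed:
  assumes "Poly_Mapping.keys m \<subseteq> V" "\<And>v. v \<in> V \<Longrightarrow> \<sigma> v = PVar v"
  shows "subst_monom \<sigma> m = Poly_Mapping.single m 1"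
proof -
  have "subst_monom \<sigma> m = subst_monom PVar m"
    using assms by (intro subst_monom_cong) auto
  then show ?thesis
    by (simp add: subst_monom_PVar)
qed

lemma psubst_eq_lin_extend: "psubst \<sigma> = lin_extend (subst_monom \<sigma>)"
  by (simp add: fun_eq_iff psubst_def lin_extend_def subst_monom_def)

interpretation psubst: comm_ring_hom "psubst \<sigma>"
  by unfold_locales
    (simp_all add: psubst_eq_lin_extend lin_extend_add lin_extend_mult subst_monom_add, simp add: lin_extend_def)

lemma psubst_PVar [simp]: "psubst \<sigma> (PVar v) = \<sigma> v"
  by (simp add: psubst_eq_lin_extend PVar_def lin_extend_single subst_monom_single)

lemma psubst_PConst [simp]: "psubst \<sigma> (PConst c) = PConst c"
  by (simp add: psubst_eq_lin_extend PConst_def lin_extend_single)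

lemma psubst_single: "psubst \<sigma> (Poly_Mapping.single m c) = PConst c * subst_monom \<sigma> m"
  by (simp add: psubst_eq_lin_extend lin_extend_single)

lemma psubst_psubst: "psubst \<tau> (psubst \<sigma> p) = psubst (\<lambda>v. psubst \<tau> (\<sigma> v)) p"
  unfolding psubst_def[of \<sigma>] psubst_def[of "\<lambda>v. psubst \<tau> (\<sigma> v)"]
  by (simp add: psubst.hom_sum psubst.hom_mult psubst.hom_prod psubst.hom_power)

lemma psubst_cong:
  assumes "poly_in V p" "\<And>v. v \<in> V \<Longrightarrow> \<sigma> v = \<tau> v"
  shows "psubst \<sigma> p = psubst \<tau> p"
  unfolding psubst_eq_lin_extend lin_extend_def
  using assms by (auto simp: poly_in_def intro!: sum.cong arg_cong2[where f = times] subst_monom_cong)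

lemma psubst_commute:
  assumes "poly_in V p" "\<And>v. v \<in> V \<Longrightarrow> psubst \<sigma> (\<tau> v) = psubst \<tau> (\<sigma> v)"
  shows "psubst \<sigma> (psubst \<tau> p) = psubst \<tau> (psubst \<sigma> p)"
  unfolding psubst_psubst using assms by (rule psubst_cong)

section \<open>Supports and partial degrees\<close>

lemma poly_in_add: "poly_in V p \<Longrightarrow> poly_in V q \<Longrightarrow> poly_in V (p + q)"
  unfolding poly_in_def using keys_add[of p q] by blast

lemma poly_in_uminus: "poly_in V (- p) \<longleftrightarrow> poly_in V p"
  by (simp add: poly_in_def)

lemma poly_in_diff: "poly_in V p \<Longrightarrow> poly_in V q \<Longrightarrow> poly_in V (p - (q :: ('v, 'k::ab_group_add) mpoly))"
  using poly_in_add[of V p "- q"] by (simp add: poly_in_uminus)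

lemma poly_in_mult:
  assumes "poly_in V p" "poly_in V q"
  shows "poly_in V (p * q)"
  unfolding poly_in_def
proof
  fix m assume "m \<in> Poly_Mapping.keys (p * q)"
  then obtain a b where "m = a + b" "a \<in> Poly_Mapping.keys p" "b \<in> Poly_Mapping.keys q"
    using keys_mult[of p q] by blast
  with assms show "Poly_Mapping.keys m \<subseteq> V"
    unfolding poly_in_def using keys_add[of a b] by blast
qed

lemma poly_in_single [simp]: "poly_in V (Poly_Mapping.single m c) \<longleftrightarrow> c = 0 \<or> Poly_Mapping.keys m \<subseteq> V"
  by (simp add: poly_in_def)

lemma poly_in_PConst [simp]: "poly_in V (PConst c)"
  by (simp add: PConst_def)

lemma poly_in_PVar: "v \<in> V \<Longrightarrow> poly_in V (PVar v)"
  by (simp add: PVar_def)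

lemma poly_in_zero [simp]: "poly_in V 0"
  by (simp add: poly_in_def)

lemma poly_in_one [simp]: "poly_in V 1"
  by (simp add: poly_in_def)

lemma poly_in_sum: "(\<And>a. a \<in> A \<Longrightarrow> poly_in V (f a)) \<Longrightarrow> poly_in V (sum f A)"
  by (induction A rule: infinite_finite_induct) (auto intro: poly_in_add)

lemma poly_in_prod: "(\<And>a. a \<in> A \<Longrightarrow> poly_in V (f a)) \<Longrightarrow> poly_in V (prod f A)"
  by (induction A rule: infinite_finite_induct) (auto intro: poly_in_mult)

lemma poly_in_power: "poly_in V p \<Longrightarrow> poly_in V (p ^ n)"
  by (induction n) (auto intro: poly_in_mult)

lemma poly_in_mono: "poly_in V p \<Longrightarrow> V \<subseteq> W \<Longrightarrow> poly_in W p"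
  by (auto simp: poly_in_def)

lemma poly_in_psubst:
  assumes "poly_in V p" "\<And>v. v \<in> V \<Longrightarrow> poly_in W (\<sigma> v)"
  shows "poly_in W (psubst \<sigma> p)"
  unfolding psubst_def using assms
  by (auto simp: poly_in_def[of V] intro!: poly_in_sum poly_in_mult poly_in_prod poly_in_power)

lemma keys_add_nat: "Poly_Mapping.keys (m + n :: 'a \<Rightarrow>\<^sub>0 nat) = Poly_Mapping.keys m \<union> Poly_Mapping.keys n"
  by (auto simp: in_keys_iff lookup_add)

lemma deg_in_add: "deg_in S (m + n) = deg_in S m + deg_in S n"
proof -
  have "deg_in S m' = (\<Sum>v\<in>(Poly_Mapping.keys m \<union> Poly_Mapping.keys n) \<inter> S. Poly_Mapping.lookup m' v)"
    if "m' \<in> {m, n, m + n}" for m'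
    unfolding deg_in_def using that
    by (intro sum.mono_neutral_left) (auto simp: keys_add_nat in_keys_iff)
  then show ?thesis
    by (simp add: lookup_add sum.distrib)
qed

lemma deg_in_zero [simp]: "deg_in S 0 = 0"
  by (simp add: deg_in_def)

lemma deg_in_single: "deg_in S (Poly_Mapping.single v n) = (if v \<in> S then n else 0)"
  by (cases "n = 0") (auto simp: deg_in_def)

lemma deg_in_eq_0_iff: "deg_in S m = 0 \<longleftrightarrow> Poly_Mapping.keys m \<inter> S = {}"
  by (auto simp: deg_in_def in_keys_iff)

lemma deg_in_eq_1_obtain:
  assumes "deg_in S m = 1"
  obtains z m' where "z \<in> S" "m = m' + Poly_Mapping.single z 1"
    "Poly_Mapping.keys m' \<subseteq> Poly_Mapping.keys m" "Poly_Mapping.keys m' \<inter> S = {}"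
proof -
  obtain z where z: "z \<in> Poly_Mapping.keys m" "z \<in> S"
    using assms deg_in_eq_0_iff[of S m] by auto
  define m' where "m' = m - Poly_Mapping.single z 1"
  have m: "m = m' + Poly_Mapping.single z 1"
    using z(1) by (intro poly_mapping_eqI) (auto simp: m'_def lookup_add lookup_minus lookup_single when_def in_keys_iff)
  then have "deg_in S m' = 0"
    using assms z(2) deg_in_add[of S m' "Poly_Mapping.single z 1"] by (simp add: deg_in_single)
  with m z(2) show thesis
    by (intro that[of z m']) (auto simp: keys_add_nat deg_in_eq_0_iff)
qed

definition homogeneous_in :: "'v set \<Rightarrow> nat \<Rightarrow> ('v, 'k::zero) mpoly \<Rightarrow> bool" where
  "homogeneous_in S d p \<longleftrightarrow> (\<forall>m\<in>Poly_Mapping.keys p. deg_in S m = d)"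

lemma homogeneous_in_zero [simp]: "homogeneous_in S d 0"
  by (simp add: homogeneous_in_def)

lemma homogeneous_in_add: "homogeneous_in S d p \<Longrightarrow> homogeneous_in S d q \<Longrightarrow> homogeneous_in S d (p + q)"
  unfolding homogeneous_in_def using keys_add[of p q] by blast

lemma homogeneous_in_uminus: "homogeneous_in S d (- p) \<longleftrightarrow> homogeneous_in S d p"
  by (simp add: homogeneous_in_def)

lemma homogeneous_in_diff:
  "homogeneous_in S d p \<Longrightarrow> homogeneous_in S d q \<Longrightarrow> homogeneous_in S d (p - (q :: ('v, 'k::ab_group_add) mpoly))"
  using homogeneous_in_add[of S d p "- q"] by (simp add: homogeneous_in_uminus)

lemma homogeneous_in_mult:
  assumes "homogeneous_in S d p" "homogeneous_in S e q"
  shows "homogeneous_in S (d + e) (p * q)"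
  unfolding homogeneous_in_def
proof
  fix m assume "m \<in> Poly_Mapping.keys (p * q)"
  then obtain a b where "m = a + b" "a \<in> Poly_Mapping.keys p" "b \<in> Poly_Mapping.keys q"
    using keys_mult[of p q] by blast
  with assms show "deg_in S m = d + e"
    by (simp add: homogeneous_in_def deg_in_add)
qed

lemma homogeneous_in_single [simp]:
  "homogeneous_in S d (Poly_Mapping.single m c) \<longleftrightarrow> c = 0 \<or> deg_in S m = d"
  by (simp add: homogeneous_in_def)

lemma homogeneous_in_PConst [simp]: "homogeneous_in S 0 (PConst c)"
  by (simp add: PConst_def)

lemma homogeneous_in_one [simp]: "homogeneous_in S 0 1"
  by (simp add: homogeneous_in_def)

lemma homogeneous_in_PVar: "homogeneous_in S (if v \<in> S then 1 else 0) (PVar v)"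
  by (simp add: PVar_def deg_in_single)

lemma homogeneous_in_PVar_in: "v \<in> S \<Longrightarrow> homogeneous_in S 1 (PVar v)"
  using homogeneous_in_PVar[of S v] by simp

lemma homogeneous_in_PVar_notin: "v \<notin> S \<Longrightarrow> homogeneous_in S 0 (PVar v)"
  using homogeneous_in_PVar[of S v] by simp

lemma homogeneous_in_PConst_mult: "homogeneous_in S d p \<Longrightarrow> homogeneous_in S d (PConst c * p)"
  using homogeneous_in_mult[of S 0 "PConst c" d p] by simp

lemma homogeneous_in_sum: "(\<And>a. a \<in> A \<Longrightarrow> homogeneous_in S d (f a)) \<Longrightarrow> homogeneous_in S d (sum f A)"
  by (induction A rule: infinite_finite_induct) (auto intro: homogeneous_in_add)

lemma homogeneous_in_power: "homogeneous_in S d p \<Longrightarrow> homogeneous_in S (d * n) (p ^ n)"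
  by (induction n) (auto dest: homogeneous_in_mult)

lemma homogeneous_in_prod:
  "(\<And>a. a \<in> A \<Longrightarrow> homogeneous_in S (d a) (f a)) \<Longrightarrow> homogeneous_in S (\<Sum>a\<in>A. d a) (prod f A)"
  by (induction A rule: infinite_finite_induct) (auto intro: homogeneous_in_mult)

lemma homogeneous_in_psubst:
  assumes "poly_in V p" "homogeneous_in S d p"
    and "\<And>v. v \<in> V \<Longrightarrow> homogeneous_in S' (if v \<in> S then 1 else 0) (\<sigma> v)"
  shows "homogeneous_in S' d (psubst \<sigma> p)"
  unfolding psubst_def
proof (intro homogeneous_in_sum homogeneous_in_PConst_mult)
  fix m assume m: "m \<in> Poly_Mapping.keys p"
  have "homogeneous_in S' (\<Sum>v\<in>Poly_Mapping.keys m. (if v \<in> S then 1 else 0) * Poly_Mapping.lookup m v)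
      (\<Prod>v\<in>Poly_Mapping.keys m. \<sigma> v ^ Poly_Mapping.lookup m v)"
    using assms(1) m by (intro homogeneous_in_prod homogeneous_in_power assms(3)) (auto simp: poly_in_def)
  moreover have "(\<Sum>v\<in>Poly_Mapping.keys m. (if v \<in> S then 1 else 0) * Poly_Mapping.lookup m v) = d"
    using assms(2) m by (simp add: homogeneous_in_def deg_in_def sum.inter_restrict of_bool_def [symmetric])
  ultimately show "homogeneous_in S' d (\<Prod>v\<in>Poly_Mapping.keys m. \<sigma> v ^ Poly_Mapping.lookup m v)"
    by simp
qed

section \<open>Matrices of polynomials\<close>

lemma index_mult_mat_sum:
  assumes "A \<in> carrier_mat n k" "B \<in> carrier_mat k n'" "i < n" "j < n'"
  shows "(A * B) $$ (i, j) = (\<Sum>l<k. A $$ (i, l) * B $$ (l, j))"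
proof -
  have "(A * B) $$ (i, j) = (\<Sum>l\<in>{0..<k}. row A i $ l * col B j $ l)"
    using assms by (simp add: scalar_prod_def)
  also have "\<dots> = (\<Sum>l<k. A $$ (i, l) * B $$ (l, j))"
    using assms by (auto simp: atLeast0LessThan intro!: sum.cong)
  finally show ?thesis .
qed

lemma conj_mult_conj:
  fixes H :: "'a::semiring_1 mat"
  assumes "H \<in> carrier_mat n n" "H * transpose_mat H = 1\<^sub>m n" "A \<in> carrier_mat n n" "B \<in> carrier_mat n n"
  shows "(transpose_mat H * A * H) * (transpose_mat H * B * H) = transpose_mat H * (A * B) * H"
proof -
  let ?Ht = "transpose_mat H"
  have c: "?Ht \<in> carrier_mat n n" "?Ht * A \<in> carrier_mat n n" "B * H \<in> carrier_mat n n"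
    using assms by auto
  have "(?Ht * A * H) * (?Ht * B * H) = (?Ht * A) * (H * (?Ht * (B * H)))"
    using assms c by (simp add: assoc_mult_mat[of _ n n _ n _ n])
  also have "H * (?Ht * (B * H)) = (H * ?Ht) * (B * H)"
    using assms c by (intro assoc_mult_mat[symmetric]) auto
  also have "(?Ht * A) * ((H * ?Ht) * (B * H)) = ?Ht * (A * B) * H"
    using assms c by (simp add: assoc_mult_mat[of _ n n _ n _ n] left_mult_one_mat[OF c(3)])
  finally show ?thesis .
qed

abbreviation const_mat :: "'k::comm_ring_1 mat \<Rightarrow> ('v, 'k) mpoly mat" where
  "const_mat h \<equiv> map_mat PConst h"

lemma map_mat_psubst_conj:
  fixes h :: "'k::comm_ring_1 mat"
  assumes "h \<in> carrier_mat n n" "A \<in> carrier_mat n n"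
  shows "map_mat (psubst \<sigma>) (transpose_mat (const_mat h) * A * const_mat h)
    = transpose_mat (const_mat h) * map_mat (psubst \<sigma>) A * const_mat h"
proof -
  let ?H = "const_mat h :: ('v, 'k) mpoly mat"
  have fix_H: "map_mat (psubst \<sigma>) ?H = ?H" "map_mat (psubst \<sigma>) (transpose_mat ?H) = transpose_mat ?H"
    by (auto intro!: eq_matI)
  have "map_mat (psubst \<sigma>) (transpose_mat ?H * A * ?H)
      = map_mat (psubst \<sigma>) (transpose_mat ?H * A) * map_mat (psubst \<sigma>) ?H"
    using assms by (intro psubst.mat_hom_mult[of _ n n]) auto
  also have "map_mat (psubst \<sigma>) (transpose_mat ?H * A)
      = map_mat (psubst \<sigma>) (transpose_mat ?H) * map_mat (psubst \<sigma>) A"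
    using assms by (intro psubst.mat_hom_mult[of _ n n]) auto
  finally show ?thesis
    by (simp only: fix_H)
qed

lemma SO3_const_mat_mult_transpose:
  assumes "(h :: 'k::field mat) \<in> SO3"
  shows "const_mat h * transpose_mat (const_mat h) = (1\<^sub>m 3 :: ('v, 'k) mpoly mat)"
proof -
  have h: "h \<in> carrier_mat 3 3" "transpose_mat h * h = 1\<^sub>m 3"
    using assms by (auto simp: SO3_def)
  have "h * transpose_mat h = 1\<^sub>m 3"
    using h mat_mult_left_right_inverse[of "transpose_mat h" 3 h] by simp
  then have "const_mat (h * transpose_mat h) = (1\<^sub>m 3 :: ('v, 'k) mpoly mat)"
    by (simp add: PConst.mat_hom_one)
  moreover have "const_mat (h * transpose_mat h) = (const_mat h * transpose_mat (const_mat h) :: ('v, 'k) mpoly mat)"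
    using h(1) PConst.mat_hom_mult[of h 3 3 "transpose_mat h" 3] by (simp add: map_mat_transpose)
  ultimately show ?thesis
    by simp
qed

(* Entries of products are expanded explicitly, by index_mult_mat_sum and index_conj_mat. *)
declare index_mult_mat(1) [simp del]

lemma sum_lessThan_3: "(\<Sum>l<(3::nat). f l) = f 0 + f 1 + (f 2 :: 'a::comm_monoid_add)"
  by (simp add: numeral_3_eq_3 numeral_2_eq_2 lessThan_Suc add.commute add.left_commute)

lemma less_3_cases: "(i::nat) < 3 \<longleftrightarrow> i = 0 \<or> i = 1 \<or> i = 2"
  by auto

lemma pair_less_3_cases: "a < b \<Longrightarrow> b < (3::nat) \<Longrightarrow> (a, b) = (0, 1) \<or> (a, b) = (0, 2) \<or> (a, b) = (1, 2)"
  by auto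

lemma index_conj_mat:
  assumes "H \<in> carrier_mat n n" "A \<in> carrier_mat n n" "i < n" "j < n"
  shows "(transpose_mat H * A * H) $$ (i, j) = (\<Sum>a<n. \<Sum>b<n. H $$ (a, i) * A $$ (a, b) * H $$ (b, j))"
proof -
  have "(transpose_mat H * A * H) $$ (i, j) = (\<Sum>a<n. H $$ (a, i) * (\<Sum>b<n. A $$ (a, b) * H $$ (b, j)))"
    using assms by (simp add: index_mult_mat_sum[of _ n n _ n])
  then show ?thesis
    by (simp add: sum_distrib_left mult.assoc)
qed

lemma conj_mat_entry_closed:
  assumes "h \<in> carrier_mat n n" "A \<in> carrier_mat n n" "i < n" "j < n"
    and "\<And>a b. a < n \<Longrightarrow> b < n \<Longrightarrow> P (A $$ (a, b))"
    and "P 0" "\<And>p q. P p \<Longrightarrow> P q \<Longrightarrow> P (p + q)" "\<And>c p. P p \<Longrightarrow> P (PConst c * p)"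
  shows "P ((transpose_mat (const_mat h) * A * const_mat h) $$ (i, j))"
proof -
  have sum_closed: "P (sum f B)" if "\<And>b. b \<in> B \<Longrightarrow> P (f b)" for f and B :: "nat set"
    using that assms(6,7) by (induction B rule: infinite_finite_induct) auto
  have "(transpose_mat (const_mat h) * A * const_mat h) $$ (i, j)
      = (\<Sum>a<n. \<Sum>b<n. PConst (h $$ (a, i) * h $$ (b, j)) * A $$ (a, b))"
    using assms(1-4) by (subst index_conj_mat[of _ n]) (auto simp: PConst.hom_mult ac_simps intro!: sum.cong)
  then show ?thesis
    using assms(5) by (auto intro!: sum_closed assms(8))
qed

lemma psubst_conj_entry:
  fixes h :: "'k::comm_ring_1 mat"
  assumes "h \<in> carrier_mat n n" "A \<in> carrier_mat n n" "i < n" "j < n"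
  shows "psubst \<sigma> ((transpose_mat (const_mat h) * A * const_mat h) $$ (i, j))
    = (transpose_mat (const_mat h) * map_mat (psubst \<sigma>) A * const_mat h) $$ (i, j)"
proof -
  have "psubst \<sigma> ((transpose_mat (const_mat h) * A * const_mat h) $$ (i, j))
      = map_mat (psubst \<sigma>) (transpose_mat (const_mat h) * A * const_mat h) $$ (i, j)"
    using assms by simp
  then show ?thesis
    by (simp only: map_mat_psubst_conj[OF assms(1,2)])
qed

lemma psubst_mult_entry:
  assumes "A \<in> carrier_mat n k" "B \<in> carrier_mat k m" "i < n" "j < m"
  shows "psubst \<sigma> ((A * B) $$ (i, j)) = (map_mat (psubst \<sigma>) A * map_mat (psubst \<sigma>) B) $$ (i, j)"
proof -
  have "psubst \<sigma> ((A * B) $$ (i, j)) = map_mat (psubst \<sigma>) (A * B) $$ (i, j)"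
    using assms by simp
  then show ?thesis
    by (simp only: psubst.mat_hom_mult[OF assms(1,2)])
qed

lemma Tvars_mono: "p \<le> q \<Longrightarrow> Tvars p \<subseteq> Tvars q"
  by (auto simp: Tvars_def)

lemma TV_in_Tvars [simp]: "TV k i j \<in> Tvars p \<longleftrightarrow> k < p \<and> i < j \<and> j < 3"
  by (simp add: Tvars_def)

lemma ZV_in_Zvars [simp]: "ZV i j \<in> Zvars \<longleftrightarrow> i < 3 \<and> j < 3"
  by (simp add: Zvars_def)

lemma TV_notin_Zvars [simp]: "TV k i j \<notin> Zvars"
  by (simp add: Zvars_def)

lemma TV_in_comp_vars [simp]: "TV k i j \<in> comp_vars l \<longleftrightarrow> k = l \<and> i < j \<and> j < 3"
  by (auto simp: comp_vars_def)

lemma Tvars_Zvars_cases: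
  assumes "v \<in> Tvars p \<union> Zvars"
  obtains (TV) k i j where "v = TV k i j" "k < p" "i < j" "j < 3"
    | (ZV) i j where "v = ZV i j" "i < 3" "j < 3"
  using assms unfolding Tvars_def Zvars_def by blast

lemma Tvars_5_minus_comp_vars: "Tvars 5 - comp_vars 3 - comp_vars 4 = Tvars 3"
  by (auto simp: Tvars_def comp_vars_def)

lemma dim_gen_skew [simp]: "dim_row (gen_skew k) = 3" "dim_col (gen_skew k) = 3"
  by (simp_all add: gen_skew_def)

lemma dim_gen_Z [simp]: "dim_row gen_Z = 3" "dim_col gen_Z = 3"
  by (simp_all add: gen_Z_def)

lemma gen_skew_carrier [simp]: "gen_skew k \<in> carrier_mat 3 3"
  by (rule carrier_matI) simp_all

lemma gen_Z_carrier [simp]: "gen_Z \<in> carrier_mat 3 3"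
  by (rule carrier_matI) simp_all

lemma gen_skew_entry:
  "i < 3 \<Longrightarrow> j < 3 \<Longrightarrow> gen_skew k $$ (i, j) =
    (if i < j then PVar (TV k i j) else if j < i then - PVar (TV k j i) else 0)"
  by (simp add: gen_skew_def)

lemma gen_Z_entry: "i < 3 \<Longrightarrow> j < 3 \<Longrightarrow> gen_Z $$ (i, j) = PVar (ZV i j)"
  by (simp add: gen_Z_def)

lemma map_mat_psubst_gen_skew_fixed:
  assumes "\<And>i j. i < j \<Longrightarrow> j < 3 \<Longrightarrow> \<sigma> (TV k i j) = PVar (TV k i j)"
  shows "map_mat (psubst \<sigma>) (gen_skew k) = gen_skew k"
  by (rule eq_matI) (auto simp: gen_skew_entry assms psubst.hom_uminus)

lemma map_mat_psubst_gen_Z_fixed: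
  assumes "\<And>i j. i < 3 \<Longrightarrow> j < 3 \<Longrightarrow> \<sigma> (ZV i j) = PVar (ZV i j)"
  shows "map_mat (psubst \<sigma>) gen_Z = gen_Z"
  by (rule eq_matI) (auto simp: gen_Z_entry assms)

lemma conj_gen_skew_skew_symmetric:
  fixes h :: "'k::comm_ring_1 mat" and k :: nat
  assumes "h \<in> carrier_mat 3 3" "a < 3" "b < 3"
  defines "M \<equiv> transpose_mat (const_mat h) * gen_skew k * const_mat h"
  shows "M $$ (a, b) = - M $$ (b, a)" "M $$ (a, a) = 0"
  using assms
  by (simp_all add: index_conj_mat[of _ 3] sum_lessThan_3 gen_skew_entry algebra_simps)

lemma poly_in_gen_skew_entry: "a < 3 \<Longrightarrow> b < 3 \<Longrightarrow> comp_vars k \<subseteq> V \<Longrightarrow> poly_in V (gen_skew k $$ (a, b))"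
  by (auto simp: gen_skew_entry comp_vars_def poly_in_uminus intro!: poly_in_PVar)

lemma homogeneous_in_gen_skew_entry_1:
  "a < 3 \<Longrightarrow> b < 3 \<Longrightarrow> comp_vars k \<subseteq> S \<Longrightarrow> homogeneous_in S 1 (gen_skew k $$ (a, b))"
  by (auto simp: gen_skew_entry comp_vars_def homogeneous_in_uminus simp del: One_nat_def intro!: homogeneous_in_PVar_in)

lemma homogeneous_in_gen_skew_entry_0:
  "a < 3 \<Longrightarrow> b < 3 \<Longrightarrow> comp_vars k \<inter> S = {} \<Longrightarrow> homogeneous_in S 0 (gen_skew k $$ (a, b))"
  by (auto simp: gen_skew_entry comp_vars_def homogeneous_in_uminus intro!: homogeneous_in_PVar_notin)

section \<open>The three substitutions\<close>

definition so_subst :: "'k::comm_ring_1 mat \<Rightarrow> var \<Rightarrow> (var, 'k) mpoly" where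
  "so_subst h v = (case v of
      TV k i j \<Rightarrow> (transpose_mat (const_mat h) * gen_skew k * const_mat h) $$ (i, j)
    | ZV i j \<Rightarrow> (transpose_mat (const_mat h) * gen_Z * const_mat h) $$ (i, j))"

definition gl_subst :: "'k::comm_ring_1 mat \<Rightarrow> var \<Rightarrow> (var, 'k) mpoly" where
  "gl_subst g v = (case v of
      TV k i j \<Rightarrow> (if k < 3 then (\<Sum>l<3. PConst (g $$ (l, k)) * PVar (TV l i j)) else PVar v)
    | ZV i j \<Rightarrow> PVar v)"

definition mu_subst :: "var \<Rightarrow> (var, 'k::comm_ring_1) mpoly" where
  "mu_subst v = (case v of
      TV k i j \<Rightarrow> (if k < 3 then PVar v else 0)
    | ZV i j \<Rightarrow> (gen_skew 3 * gen_skew 4) $$ (i, j))"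

lemma so_act_eq_psubst: "so_act h = psubst (so_subst h)"
  unfolding so_act_def so_subst_def Let_def ..

lemma gl_act_eq_psubst: "gl_act g = psubst (gl_subst g)"
  unfolding gl_act_def gl_subst_def ..

lemma mu_star_eq_psubst: "mu_star = psubst mu_subst"
  unfolding mu_star_def mu_subst_def ..

lemma map_mat_psubst_so_gen_skew:
  assumes "h \<in> carrier_mat 3 3"
  shows "map_mat (psubst (so_subst h)) (gen_skew k) = transpose_mat (const_mat h) * gen_skew k * const_mat h"
proof (rule eq_matI)
  fix a b assume "a < dim_row (transpose_mat (const_mat h) * gen_skew k * const_mat h :: (var, 'a) mpoly mat)"
    "b < dim_col (transpose_mat (const_mat h) * gen_skew k * const_mat h :: (var, 'a) mpoly mat)"
  then have "a < 3" "b < 3"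
    using assms by auto
  then show "map_mat (psubst (so_subst h)) (gen_skew k) $$ (a, b) = (transpose_mat (const_mat h) * gen_skew k * const_mat h) $$ (a, b)"
    using conj_gen_skew_skew_symmetric[OF assms \<open>a < 3\<close> \<open>b < 3\<close>]
      conj_gen_skew_skew_symmetric[OF assms \<open>b < 3\<close> \<open>a < 3\<close>]
    by (cases a b rule: linorder_cases) (simp_all add: gen_skew_entry so_subst_def psubst.hom_uminus)
qed (use assms in auto)

lemma map_mat_psubst_mu_gen_Z: "map_mat (psubst mu_subst) gen_Z = gen_skew 3 * gen_skew 4"
  by (rule eq_matI) (auto simp: gen_Z_entry mu_subst_def)

lemma map_mat_psubst_mu_gen_skew: "k < 3 \<Longrightarrow> map_mat (psubst mu_subst) (gen_skew k) = gen_skew k"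
  by (rule map_mat_psubst_gen_skew_fixed) (simp add: mu_subst_def)

lemma map_mat_psubst_gl_gen_skew: "3 \<le> k \<Longrightarrow> map_mat (psubst (gl_subst g)) (gen_skew k) = gen_skew k"
  by (rule map_mat_psubst_gen_skew_fixed) (simp add: gl_subst_def)

lemma map_mat_psubst_gl_gen_Z: "map_mat (psubst (gl_subst g)) gen_Z = gen_Z"
  by (rule map_mat_psubst_gen_Z_fixed) (simp add: gl_subst_def)

lemma psubst_gl_gen_skew_entry:
  assumes "a < 3" "b < 3" "k < 3"
  shows "psubst (gl_subst g) (gen_skew k $$ (a, b)) = (\<Sum>l<3. PConst (g $$ (l, k)) * gen_skew l $$ (a, b))"
  using assms by (auto simp: gen_skew_entry gl_subst_def psubst.hom_uminus sum_negf)

lemma mu_subst_ZV: "i < 3 \<Longrightarrow> j < 3 \<Longrightarrow> mu_subst (ZV i j) = (\<Sum>l<3. gen_skew 3 $$ (i, l) * gen_skew 4 $$ (l, j))"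
  by (simp add: mu_subst_def index_mult_mat_sum[of _ 3 3 _ 3])

lemma mu_subst_Tvars_3: "v \<in> Tvars 3 \<Longrightarrow> mu_subst v = PVar v"
  by (auto simp: mu_subst_def Tvars_def)

lemma psubst_so_mu_subst:
  fixes h :: "'k::field mat"
  assumes "h \<in> SO3" "v \<in> Tvars 3 \<union> Zvars"
  shows "psubst (so_subst h) (mu_subst v) = psubst mu_subst (so_subst h v)"
proof -
  have h: "h \<in> carrier_mat 3 3"
    using assms(1) by (simp add: SO3_def)
  from assms(2) show ?thesis
  proof (cases rule: Tvars_Zvars_cases)
    case (TV k i j)
    then show ?thesis
      using h by (simp add: mu_subst_def so_subst_def psubst_conj_entry map_mat_psubst_mu_gen_skew)
  next
    case (ZV i j)
    then have "psubst (so_subst h) (mu_subst v)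
        = ((transpose_mat (const_mat h) * gen_skew 3 * const_mat h)
            * (transpose_mat (const_mat h) * gen_skew 4 * const_mat h)) $$ (i, j)"
      using h by (simp add: mu_subst_def psubst_mult_entry[of _ 3 3 _ 3] map_mat_psubst_so_gen_skew)
    also have "\<dots> = (transpose_mat (const_mat h) * (gen_skew 3 * gen_skew 4) * const_mat h) $$ (i, j)"
      using h SO3_const_mat_mult_transpose[OF assms(1), where 'v = var]
      by (intro arg_cong[where f = "\<lambda>M. M $$ (i, j)"] conj_mult_conj) auto
    also have "\<dots> = psubst mu_subst (so_subst h v)"
      using ZV h by (simp add: so_subst_def psubst_conj_entry map_mat_psubst_mu_gen_Z)
    finally show ?thesis .
  qed
qed

lemma psubst_so_gl_subst:
  assumes "g \<in> carrier_mat 3 3" "h \<in> carrier_mat 3 3" "v \<in> Tvars 5 \<union> Zvars"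
  shows "psubst (so_subst h) (gl_subst g v) = psubst (gl_subst g) (so_subst h v)"
  using assms(3)
proof (cases rule: Tvars_Zvars_cases)
  case (TV k i j)
  show ?thesis
  proof (cases "k < 3")
    case True
    have "psubst (gl_subst g) (so_subst h v)
        = (transpose_mat (const_mat h) * map_mat (psubst (gl_subst g)) (gen_skew k) * const_mat h) $$ (i, j)"
      using TV assms(2) by (simp add: so_subst_def psubst_conj_entry)
    also have "\<dots> = (\<Sum>a<3. \<Sum>b<3. PConst (h $$ (a, i))
        * (\<Sum>l<3. PConst (g $$ (l, k)) * gen_skew l $$ (a, b)) * PConst (h $$ (b, j)))"
      using TV True assms(2) by (simp add: index_conj_mat[of _ 3] psubst_gl_gen_skew_entry)
    also have "\<dots> = (\<Sum>l<3. PConst (g $$ (l, k)) * (\<Sum>a<3. \<Sum>b<3.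
        PConst (h $$ (a, i)) * gen_skew l $$ (a, b) * PConst (h $$ (b, j))))"
      by (simp add: sum_lessThan_3 algebra_simps)
    also have "\<dots> = psubst (so_subst h) (gl_subst g v)"
      using TV True assms(2)
      by (simp add: gl_subst_def so_subst_def psubst.hom_sum psubst.hom_mult index_conj_mat[of _ 3])
    finally show ?thesis
      by simp
  next
    case False
    then show ?thesis
      using TV assms(2) by (simp add: gl_subst_def so_subst_def psubst_conj_entry map_mat_psubst_gl_gen_skew)
  qed
next
  case (ZV i j)
  then show ?thesis
    using assms(2) by (simp add: gl_subst_def so_subst_def psubst_conj_entry map_mat_psubst_gl_gen_Z)
qed

lemma psubst_mu_gl_subst:
  assumes "v \<in> Tvars 3 \<union> Zvars"
  shows "psubst mu_subst (gl_subst g v) = psubst (gl_subst g) (mu_subst v)"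
  using assms
proof (cases rule: Tvars_Zvars_cases)
  case (TV k i j)
  then show ?thesis
    by (simp add: gl_subst_def mu_subst_def psubst.hom_sum psubst.hom_mult)
next
  case (ZV i j)
  then show ?thesis
    by (simp add: gl_subst_def mu_subst_def psubst_mult_entry[of _ 3 3 _ 3] map_mat_psubst_gl_gen_skew)
qed

lemma so_act_mu_star:
  fixes h :: "'k::field mat"
  assumes "h \<in> SO3" "poly_in (Tvars 3 \<union> Zvars) p"
  shows "so_act h (mu_star p) = mu_star (so_act h p)"
  unfolding so_act_eq_psubst mu_star_eq_psubst using assms(2) psubst_so_mu_subst[OF assms(1)]
  by (rule psubst_commute)

lemma so_act_gl_act:
  assumes "g \<in> carrier_mat 3 3" "h \<in> carrier_mat 3 3" "poly_in (Tvars 5 \<union> Zvars) p"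
  shows "so_act h (gl_act g p) = gl_act g (so_act h p)"
  unfolding so_act_eq_psubst gl_act_eq_psubst using assms(3) psubst_so_gl_subst[OF assms(1,2)]
  by (rule psubst_commute)

lemma mu_star_gl_act:
  assumes "poly_in (Tvars 3 \<union> Zvars) p"
  shows "mu_star (gl_act g p) = gl_act g (mu_star p)"
  unfolding mu_star_eq_psubst gl_act_eq_psubst using assms psubst_mu_gl_subst
  by (rule psubst_commute)

lemma so_invariant_gl_act:
  assumes "g \<in> carrier_mat 3 3" "poly_in (Tvars 5 \<union> Zvars) p" "so_invariant p"
  shows "so_invariant (gl_act g p)"
  using assms by (simp add: so_invariant_def so_act_gl_act SO3_def)

lemma poly_in_so_subst:
  assumes "h \<in> carrier_mat 3 3" "v \<in> Tvars 3 \<union> Zvars"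
  shows "poly_in (Tvars 3 \<union> Zvars) (so_subst h v)"
  using assms(2)
proof (cases rule: Tvars_Zvars_cases)
  case (TV k i j)
  then have "comp_vars k \<subseteq> Tvars 3 \<union> Zvars"
    by (auto simp: comp_vars_def Tvars_def)
  with TV assms(1) show ?thesis
    unfolding so_subst_def
    by (auto intro!: conj_mat_entry_closed[where P = "poly_in _"] poly_in_gen_skew_entry poly_in_add poly_in_mult)
next
  case (ZV i j)
  with assms(1) show ?thesis
    unfolding so_subst_def
    by (auto intro!: conj_mat_entry_closed[where P = "poly_in _"] poly_in_add poly_in_mult poly_in_PVar
        simp: gen_Z_entry)
qed

lemma homogeneous_in_so_subst:
  assumes "h \<in> carrier_mat 3 3" "v \<in> Tvars 3 \<union> Zvars"
  shows "homogeneous_in Zvars (if v \<in> Zvars then 1 else 0) (so_subst h v)"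
  using assms(2)
proof (cases rule: Tvars_Zvars_cases)
  case (TV k i j)
  then have "comp_vars k \<inter> Zvars = {}"
    by (auto simp: comp_vars_def Zvars_def)
  with TV assms(1) show ?thesis
    unfolding so_subst_def
    by (auto intro!: conj_mat_entry_closed[where P = "homogeneous_in _ _"] homogeneous_in_gen_skew_entry_0
        homogeneous_in_add homogeneous_in_PConst_mult simp: Zvars_def)
next
  case (ZV i j)
  with assms(1) show ?thesis
    unfolding so_subst_def
    by (auto intro!: conj_mat_entry_closed[where P = "homogeneous_in _ _"] homogeneous_in_add
        homogeneous_in_PConst_mult homogeneous_in_PVar_in simp: gen_Z_entry simp del: One_nat_def)
qed

lemma poly_in_gl_subst:
  assumes "Tvars 3 \<subseteq> W" "W \<subseteq> Tvars 5 \<union> Zvars" "v \<in> W"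
  shows "poly_in W (gl_subst g v)"
proof -
  have "v \<in> Tvars 5 \<union> Zvars"
    using assms(2,3) by blast
  then show ?thesis
  proof (cases rule: Tvars_Zvars_cases)
    case (TV k i j)
    then show ?thesis
      using assms(1,3) by (auto simp: gl_subst_def intro!: poly_in_sum poly_in_mult poly_in_PVar)
  next
    case (ZV i j)
    then show ?thesis
      using assms(3) by (simp add: gl_subst_def poly_in_PVar)
  qed
qed

lemma homogeneous_in_gl_subst:
  assumes "S \<inter> Tvars 3 = {}" "v \<in> Tvars 5 \<union> Zvars"
  shows "homogeneous_in S (if v \<in> S then 1 else 0) (gl_subst g v)"
  using assms(2)
proof (cases rule: Tvars_Zvars_cases)
  case (TV k i j)
  then show ?thesis
    using assms(1) homogeneous_in_PVar[of S v]
    by (auto simp: gl_subst_def intro!: homogeneous_in_sum homogeneous_in_PConst_mult homogeneous_in_PVar_notin)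
next
  case (ZV i j)
  then show ?thesis
    using homogeneous_in_PVar[of S v] by (simp add: gl_subst_def)
qed

lemma poly_in_mu_subst:
  assumes "v \<in> Tvars 3 \<union> Zvars"
  shows "poly_in (Tvars 5) (mu_subst v)"
  using assms
proof (cases rule: Tvars_Zvars_cases)
  case (TV k i j)
  then show ?thesis
    by (simp add: mu_subst_def poly_in_PVar)
next
  case (ZV i j)
  have "comp_vars 3 \<subseteq> Tvars 5" "comp_vars 4 \<subseteq> Tvars 5"
    by (auto simp: comp_vars_def)
  with ZV show ?thesis
    by (auto simp: mu_subst_ZV intro!: poly_in_sum poly_in_mult poly_in_gen_skew_entry)
qed

lemma homogeneous_in_mu_subst:
  assumes "v \<in> Tvars 3 \<union> Zvars" "k \<in> {3, 4}"
  shows "homogeneous_in (comp_vars k) (if v \<in> Zvars then 1 else 0) (mu_subst v)"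
  using assms(1)
proof (cases rule: Tvars_Zvars_cases)
  case (TV k i j)
  then show ?thesis
    using assms(2) by (auto simp: mu_subst_def intro!: homogeneous_in_PVar_notin)
next
  case (ZV i j)
  have "homogeneous_in (comp_vars 3) (1 + 0) (gen_skew 3 $$ (i, l) * gen_skew 4 $$ (l, j))"
    "homogeneous_in (comp_vars 4) (0 + 1) (gen_skew 3 $$ (i, l) * gen_skew 4 $$ (l, j))" if "l < 3" for l
    using that ZV
    by (intro homogeneous_in_mult homogeneous_in_gen_skew_entry_0 homogeneous_in_gen_skew_entry_1;
        auto simp: comp_vars_def)+
  then show ?thesis
    using ZV assms(2) by (auto intro!: homogeneous_in_sum simp: mu_subst_ZV)
qed

definition TZ_deg1 :: "(var, 'k::comm_ring_1) mpoly set" where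
  "TZ_deg1 = {p. poly_in (Tvars 3 \<union> Zvars) p \<and> homogeneous_in Zvars 1 p}"

definition T5_deg11 :: "(var, 'k::comm_ring_1) mpoly set" where
  "T5_deg11 = {p. poly_in (Tvars 5) p \<and> homogeneous_in (comp_vars 3) 1 p \<and> homogeneous_in (comp_vars 4) 1 p}"

lemma mem_TZ_deg1: "p \<in> TZ_deg1 \<longleftrightarrow> poly_in (Tvars 3 \<union> Zvars) p \<and> homogeneous_in Zvars 1 p"
  by (simp add: TZ_deg1_def)

lemma mem_T5_deg11:
  "p \<in> T5_deg11 \<longleftrightarrow> poly_in (Tvars 5) p \<and> homogeneous_in (comp_vars 3) 1 p \<and> homogeneous_in (comp_vars 4) 1 p"
  by (simp add: T5_deg11_def)

lemma inv_TZ_deg1_eq: "inv_TZ_deg1 = {p \<in> TZ_deg1. so_invariant p}"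
  by (auto simp: inv_TZ_deg1_def TZ_deg1_def homogeneous_in_def)

lemma inv_T5_deg11_eq: "inv_T5_deg11 = {p \<in> T5_deg11. so_invariant p}"
  by (auto simp: inv_T5_deg11_def T5_deg11_def homogeneous_in_def)

lemma psubst_TZ_deg1:
  assumes "\<And>v. v \<in> Tvars 3 \<union> Zvars \<Longrightarrow> poly_in W (\<sigma> v)"
    and "\<And>v. v \<in> Tvars 3 \<union> Zvars \<Longrightarrow> homogeneous_in S (if v \<in> Zvars then 1 else 0) (\<sigma> v)"
    and "p \<in> TZ_deg1"
  shows "poly_in W (psubst \<sigma> p)" "homogeneous_in S 1 (psubst \<sigma> p)"
  using assms unfolding TZ_deg1_def by (blast intro: poly_in_psubst homogeneous_in_psubst)+

lemma so_act_TZ_deg1: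
  assumes "h \<in> carrier_mat 3 3" "p \<in> TZ_deg1"
  shows "so_act h p \<in> TZ_deg1"
  unfolding so_act_eq_psubst mem_TZ_deg1
  using psubst_TZ_deg1[OF poly_in_so_subst[OF assms(1)] homogeneous_in_so_subst[OF assms(1)] assms(2)] by blast

lemma gl_act_TZ_deg1:
  assumes "p \<in> TZ_deg1"
  shows "gl_act g p \<in> TZ_deg1"
proof -
  have P: "poly_in (Tvars 3 \<union> Zvars) (gl_subst g v)" if "v \<in> Tvars 3 \<union> Zvars" for v
    using that Tvars_mono[of 3 5] by (intro poly_in_gl_subst) auto
  have H: "homogeneous_in Zvars (if v \<in> Zvars then 1 else 0) (gl_subst g v)" if "v \<in> Tvars 3 \<union> Zvars" for v
    using that Tvars_mono[of 3 5] by (intro homogeneous_in_gl_subst) (auto simp: Tvars_def Zvars_def)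
  show ?thesis
    unfolding gl_act_eq_psubst mem_TZ_deg1 using psubst_TZ_deg1[OF P H assms] by blast
qed

lemma gl_act_T5_deg11:
  assumes "p \<in> T5_deg11"
  shows "gl_act g p \<in> T5_deg11"
proof -
  have "comp_vars k \<inter> Tvars 3 = {}" if "k \<in> {3, 4}" for k
    using that by (auto simp: comp_vars_def)
  then have "homogeneous_in (comp_vars k) 1 (psubst (gl_subst g) p)" if "k \<in> {3, 4}" for k
    using that assms unfolding mem_T5_deg11
    by (auto intro!: homogeneous_in_psubst[where S = "comp_vars k"] homogeneous_in_gl_subst)
  moreover have "poly_in (Tvars 5) (psubst (gl_subst g) p)"
    using assms Tvars_mono[of 3 5] unfolding mem_T5_deg11 by (auto intro!: poly_in_psubst poly_in_gl_subst)
  ultimately show ?thesis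
    by (simp add: mem_T5_deg11 gl_act_eq_psubst)
qed

lemma mu_star_TZ_deg1:
  assumes "p \<in> TZ_deg1"
  shows "mu_star p \<in> T5_deg11"
  unfolding mu_star_eq_psubst mem_T5_deg11
  using psubst_TZ_deg1[OF poly_in_mu_subst homogeneous_in_mu_subst[of _ 3] assms]
    psubst_TZ_deg1[OF poly_in_mu_subst homogeneous_in_mu_subst[of _ 4] assms]
  by simp

lemma gl_act_inv_TZ_deg1:
  assumes "g \<in> GL3" "p \<in> inv_TZ_deg1"
  shows "gl_act g p \<in> inv_TZ_deg1"
proof -
  have p: "p \<in> TZ_deg1" "so_invariant p"
    using assms(2) by (auto simp: inv_TZ_deg1_eq)
  then have "poly_in (Tvars 5 \<union> Zvars) p"
    using Tvars_mono[of 3 5] by (auto simp: mem_TZ_deg1 intro: poly_in_mono)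
  with assms(1) p show ?thesis
    by (simp add: inv_TZ_deg1_eq gl_act_TZ_deg1 so_invariant_gl_act GL3_def)
qed

lemma gl_act_inv_T5_deg11:
  assumes "g \<in> GL3" "p \<in> inv_T5_deg11"
  shows "gl_act g p \<in> inv_T5_deg11"
proof -
  have p: "p \<in> T5_deg11" "so_invariant p"
    using assms(2) by (auto simp: inv_T5_deg11_eq)
  then have "poly_in (Tvars 5 \<union> Zvars) p"
    by (auto simp: mem_T5_deg11 intro: poly_in_mono)
  with assms(1) p show ?thesis
    by (simp add: inv_T5_deg11_eq gl_act_T5_deg11 so_invariant_gl_act GL3_def)
qed

lemma TZ_deg1_monom_obtain:
  assumes "Poly_Mapping.keys m \<subseteq> Tvars 3 \<union> Zvars" "deg_in Zvars m = 1"
  obtains m' i j where "m = m' + Poly_Mapping.single (ZV i j) 1" "i < 3" "j < 3" "Poly_Mapping.keys m' \<subseteq> Tvars 3"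
proof -
  obtain z m' where m': "z \<in> Zvars" "m = m' + Poly_Mapping.single z 1"
    "Poly_Mapping.keys m' \<subseteq> Poly_Mapping.keys m" "Poly_Mapping.keys m' \<inter> Zvars = {}"
    using assms(2) by (rule deg_in_eq_1_obtain)
  from m'(1) obtain i j where "z = ZV i j" "i < 3" "j < 3"
    by (auto simp: Zvars_def)
  moreover have "Poly_Mapping.keys m' \<subseteq> Tvars 3"
    using assms(1) m'(3,4) by blast
  ultimately show thesis
    using that m'(2) by blast
qed

lemma T5_deg11_monom_obtain:
  assumes "Poly_Mapping.keys m \<subseteq> Tvars 5" "deg_in (comp_vars 3) m = 1" "deg_in (comp_vars 4) m = 1"
  obtains m' x y where "m = m' + Poly_Mapping.single x 1 + Poly_Mapping.single y 1"
    "x \<in> comp_vars 3" "y \<in> comp_vars 4" "Poly_Mapping.keys m' \<subseteq> Tvars 3"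
proof -
  obtain x m1 where x: "x \<in> comp_vars 3" "m = m1 + Poly_Mapping.single x 1"
    "Poly_Mapping.keys m1 \<subseteq> Poly_Mapping.keys m" "Poly_Mapping.keys m1 \<inter> comp_vars 3 = {}"
    using assms(2) by (rule deg_in_eq_1_obtain)
  have "x \<notin> comp_vars 4"
    using x(1) by (auto simp: comp_vars_def)
  then have "deg_in (comp_vars 4) m1 = 1"
    using assms(3) x(2) by (simp add: deg_in_add deg_in_single)
  then obtain y m' where y: "y \<in> comp_vars 4" "m1 = m' + Poly_Mapping.single y 1"
    "Poly_Mapping.keys m' \<subseteq> Poly_Mapping.keys m1" "Poly_Mapping.keys m' \<inter> comp_vars 4 = {}"
    by (rule deg_in_eq_1_obtain)
  have "Poly_Mapping.keys m' \<subseteq> Tvars 5 - comp_vars 3 - comp_vars 4"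
    using assms(1) x(3,4) y(3,4) by blast
  with x y show thesis
    by (intro that[of m' x y]) (simp_all add: ac_simps Tvars_5_minus_comp_vars)
qed

section \<open>The inverse of mu_star\<close>

(* Keeps the numeral 1 in the index tables below from being rewritten to Suc 0. *)
declare One_nat_def [simp del]

abbreviation t4 :: "nat \<Rightarrow> nat \<Rightarrow> (var, 'k::comm_ring_1) mpoly" where
  "t4 a b \<equiv> PVar (TV 3 a b)"

abbreviation t5 :: "nat \<Rightarrow> nat \<Rightarrow> (var, 'k::comm_ring_1) mpoly" where
  "t5 a b \<equiv> PVar (TV 4 a b)"

abbreviation zvar :: "nat \<Rightarrow> nat \<Rightarrow> (var, 'k::comm_ring_1) mpoly" where
  "zvar i j \<equiv> PVar (ZV i j)"

lemma mu_subst_ZV_explicit: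
  "mu_subst (ZV 0 0) = - (t4 0 1 * t5 0 1) - t4 0 2 * t5 0 2"
  "mu_subst (ZV 1 1) = - (t4 0 1 * t5 0 1) - t4 1 2 * t5 1 2"
  "mu_subst (ZV 2 2) = - (t4 0 2 * t5 0 2) - t4 1 2 * t5 1 2"
  "mu_subst (ZV 0 1) = - (t4 0 2 * t5 1 2)"
  "mu_subst (ZV 0 2) = t4 0 1 * t5 1 2"
  "mu_subst (ZV 1 0) = - (t4 1 2 * t5 0 2)"
  "mu_subst (ZV 1 2) = - (t4 0 1 * t5 0 2)"
  "mu_subst (ZV 2 0) = t4 1 2 * t5 0 1"
  "mu_subst (ZV 2 1) = - (t4 0 2 * t5 0 1)"
  by (simp_all add: mu_subst_ZV sum_lessThan_3 gen_skew_entry)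

(* The linear form in the z_ij that mu_star maps to t4 a b * t5 c d: the off-diagonal products are,
   up to sign, single entries of X Y, and t4 a b * t5 a b = z_kk - tr Z / 2 for the index k not in {a, b}. *)
definition prod_preimage :: "nat \<times> nat \<Rightarrow> nat \<times> nat \<Rightarrow> (var, 'k::field_char_0) mpoly" where
  "prod_preimage ab cd =
    (if ab = (0, 1) \<and> cd = (0, 1) then PConst (1 / 2) * (zvar 2 2 - zvar 0 0 - zvar 1 1)
     else if ab = (0, 2) \<and> cd = (0, 2) then PConst (1 / 2) * (zvar 1 1 - zvar 0 0 - zvar 2 2)
     else if ab = (1, 2) \<and> cd = (1, 2) then PConst (1 / 2) * (zvar 0 0 - zvar 1 1 - zvar 2 2)
     else if ab = (0, 1) \<and> cd = (0, 2) then - zvar 1 2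
     else if ab = (0, 1) \<and> cd = (1, 2) then zvar 0 2
     else if ab = (0, 2) \<and> cd = (0, 1) then - zvar 2 1
     else if ab = (0, 2) \<and> cd = (1, 2) then - zvar 0 1
     else if ab = (1, 2) \<and> cd = (0, 1) then zvar 2 0
     else if ab = (1, 2) \<and> cd = (0, 2) then - zvar 1 0
     else 0)"

lemma half_add_self: "PConst (1 / 2) * (p + p) = (p :: ('v, 'k::field_char_0) mpoly)"
proof -
  have "PConst (1 / 2) * (p + p) = (PConst (1 / 2) + PConst (1 / 2)) * p"
    by (simp add: algebra_simps)
  also have "PConst (1 / 2) + PConst (1 / 2) = (PConst (1 / 2 + 1 / 2) :: ('v, 'k) mpoly)"
    by (rule PConst.hom_add [symmetric])
  finally show ?thesis
    by simp
qed

lemma half_mult_eq_iff: "PConst (1 / 2) * p = q \<longleftrightarrow> p = q + (q :: ('v, 'k::field_char_0) mpoly)"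
proof
  assume q: "PConst (1 / 2) * p = q"
  have "q + q = PConst (1 / 2) * (p + p)"
    by (simp only: distrib_left q)
  then show "p = q + q"
    by (simp only: half_add_self)
qed (simp only: half_add_self)

lemma mu_star_prod_preimage:
  assumes "a < b" "b < 3" "c < d" "d < 3"
  shows "psubst mu_subst (prod_preimage (a, b) (c, d)) = t4 a b * (t5 c d :: (var, 'k::field_char_0) mpoly)"
  using pair_less_3_cases[OF assms(1,2)] pair_less_3_cases[OF assms(3,4)]
  by (elim disjE; simp add: prod_preimage_def mu_subst_ZV_explicit psubst.hom_minus psubst.hom_mult
      psubst.hom_uminus half_mult_eq_iff; simp add: algebra_simps)

lemma prod_preimage_off_diag:
  "prod_preimage (0, 1) (0, 2) = - zvar 1 2" "prod_preimage (0, 1) (1, 2) = zvar 0 2"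
  "prod_preimage (0, 2) (0, 1) = - zvar 2 1" "prod_preimage (0, 2) (1, 2) = - zvar 0 1"
  "prod_preimage (1, 2) (0, 1) = zvar 2 0" "prod_preimage (1, 2) (0, 2) = - zvar 1 0"
  by (simp_all add: prod_preimage_def)

lemma prod_preimage_diag_sums:
  "- prod_preimage (0, 1) (0, 1) - prod_preimage (0, 2) (0, 2) = zvar 0 0"
  "- prod_preimage (0, 1) (0, 1) - prod_preimage (1, 2) (1, 2) = zvar 1 1"
  "- prod_preimage (0, 2) (0, 2) - prod_preimage (1, 2) (1, 2) = zvar 2 2"
  by (simp_all add: prod_preimage_def) (rule trans [OF _ half_add_self], simp add: algebra_simps)+

lemma poly_in_prod_preimage: "poly_in Zvars (prod_preimage ab cd)"
  unfolding prod_preimage_def by (simp add: poly_in_PVar poly_in_uminus poly_in_diff poly_in_mult)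

lemma homogeneous_in_prod_preimage: "homogeneous_in Zvars 1 (prod_preimage ab cd)"
  unfolding prod_preimage_def
  by (simp add: homogeneous_in_PVar_in homogeneous_in_uminus homogeneous_in_diff homogeneous_in_PConst_mult)

fun var_index :: "var \<Rightarrow> nat \<times> nat" where
  "var_index (TV k i j) = (i, j)"
| "var_index (ZV i j) = (i, j)"

(* On a monomial of bidegree (1,1) both sums have exactly one term (mu_inv_monom_eq). *)
definition mu_inv_monom :: "(var \<Rightarrow>\<^sub>0 nat) \<Rightarrow> (var, 'k::field_char_0) mpoly" where
  "mu_inv_monom m = (\<Sum>x\<in>Poly_Mapping.keys m \<inter> comp_vars 3. \<Sum>y\<in>Poly_Mapping.keys m \<inter> comp_vars 4.
      Poly_Mapping.single (m - Poly_Mapping.single x 1 - Poly_Mapping.single y 1) 1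
        * prod_preimage (var_index x) (var_index y))"

definition mu_inv :: "(var, 'k::field_char_0) mpoly \<Rightarrow> (var, 'k) mpoly" where
  "mu_inv = lin_extend mu_inv_monom"

lemma mu_inv_uminus: "mu_inv (- p) = - mu_inv p"
  by (simp add: mu_inv_def lin_extend_uminus)

lemma mu_inv_diff: "mu_inv (p - q) = mu_inv p - mu_inv q"
  by (simp add: mu_inv_def lin_extend_diff)

lemma mu_inv_monom_eq:
  assumes "Poly_Mapping.keys m \<subseteq> Tvars 3" "x \<in> comp_vars 3" "y \<in> comp_vars 4"
  shows "mu_inv_monom (m + Poly_Mapping.single x 1 + Poly_Mapping.single y 1)
    = Poly_Mapping.single m 1 * prod_preimage (var_index x) (var_index y)"
proof -
  let ?M = "m + Poly_Mapping.single x 1 + Poly_Mapping.single y 1"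
  have disj: "Tvars 3 \<inter> comp_vars 3 = {}" "Tvars 3 \<inter> comp_vars 4 = {}" "comp_vars 3 \<inter> comp_vars 4 = {}"
    by (auto simp: Tvars_def comp_vars_def)
  have "Poly_Mapping.keys ?M = Poly_Mapping.keys m \<union> {x, y}"
    by (auto simp: keys_add_nat)
  then have "Poly_Mapping.keys ?M \<inter> comp_vars 3 = {x}" "Poly_Mapping.keys ?M \<inter> comp_vars 4 = {y}"
    using assms disj by auto
  moreover have "?M - Poly_Mapping.single x 1 - Poly_Mapping.single y 1 = m"
    by (simp add: diff_diff_add add.assoc)
  ultimately show ?thesis
    by (simp add: mu_inv_monom_def)
qed

lemma mu_inv_mult_t4_t5:
  assumes "Poly_Mapping.keys m \<subseteq> Tvars 3" "a < b" "b < 3" "c < d" "d < 3"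
  shows "mu_inv (Poly_Mapping.single m 1 * (t4 a b * t5 c d))
    = Poly_Mapping.single m 1 * (prod_preimage (a, b) (c, d) :: (var, 'k::field_char_0) mpoly)"
proof -
  have "Poly_Mapping.single m 1 * (t4 a b * t5 c d)
      = (Poly_Mapping.single (m + Poly_Mapping.single (TV 3 a b) 1 + Poly_Mapping.single (TV 4 c d) 1) 1 :: (var, 'k) mpoly)"
    by (simp add: PVar_def mult_single add.assoc)
  then show ?thesis
    using assms by (simp add: mu_inv_def lin_extend_single mu_inv_monom_eq)
qed

lemma mu_inv_mu_subst_ZV:
  assumes "Poly_Mapping.keys m \<subseteq> Tvars 3" "i < 3" "j < 3"
  shows "mu_inv (Poly_Mapping.single m 1 * mu_subst (ZV i j)) = Poly_Mapping.single m 1 * (zvar i j :: (var, 'k::field_char_0) mpoly)"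
  using less_3_cases[THEN iffD1, OF assms(2)] less_3_cases[THEN iffD1, OF assms(3)] assms(1)
  by (elim disjE; hypsubst; simp only: mu_subst_ZV_explicit right_diff_distrib mult_minus_right mu_inv_diff
      mu_inv_uminus; simp add: mu_inv_mult_t4_t5;
      simp add: prod_preimage_off_diag prod_preimage_diag_sums [symmetric] algebra_simps)

lemma mu_inv_mu_star:
  assumes "p \<in> TZ_deg1"
  shows "mu_inv (mu_star p) = p"
proof -
  have "mu_inv (subst_monom mu_subst m) = Poly_Mapping.single m 1" if "m \<in> Poly_Mapping.keys p" for m
  proof -
    have "Poly_Mapping.keys m \<subseteq> Tvars 3 \<union> Zvars" "deg_in Zvars m = 1"
      using that assms by (auto simp: mem_TZ_deg1 poly_in_def homogeneous_in_def)
    then obtain m' i j where m: "m = m' + Poly_Mapping.single (ZV i j) 1" "i < 3" "j < 3" "Poly_Mapping.keys m' \<subseteq> Tvars 3"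
      by (rule TZ_deg1_monom_obtain)
    have "mu_inv (subst_monom mu_subst m) = Poly_Mapping.single m' 1 * zvar i j"
      using m by (simp add: subst_monom_add subst_monom_single mu_inv_mu_subst_ZV
          subst_monom_fixed[OF m(4) mu_subst_Tvars_3])
    also have "\<dots> = Poly_Mapping.single m 1"
      by (simp add: m(1) PVar_def mult_single)
    finally show ?thesis .
  qed
  then have "lin_extend (\<lambda>m. mu_inv (subst_monom mu_subst m)) p = p"
    by (rule lin_extend_eq_self)
  then show ?thesis
    by (simp add: mu_inv_def mu_star_eq_psubst psubst_eq_lin_extend lin_extend_lin_extend)
qed

lemma mu_inv_monom_T5_deg11:
  assumes "Poly_Mapping.keys m \<subseteq> Tvars 5" "deg_in (comp_vars 3) m = 1" "deg_in (comp_vars 4) m = 1"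
  shows "mu_star (mu_inv_monom m) = Poly_Mapping.single m 1" "mu_inv_monom m \<in> TZ_deg1"
proof -
  obtain m' x y where m: "m = m' + Poly_Mapping.single x 1 + Poly_Mapping.single y 1"
    "x \<in> comp_vars 3" "y \<in> comp_vars 4" "Poly_Mapping.keys m' \<subseteq> Tvars 3"
    using assms by (rule T5_deg11_monom_obtain)
  obtain a b c d where xy: "x = TV 3 a b" "a < b" "b < 3" "y = TV 4 c d" "c < d" "d < 3"
    using m(2,3) by (auto simp: comp_vars_def)
  have inv: "mu_inv_monom m = Poly_Mapping.single m' 1 * prod_preimage (a, b) (c, d)"
    using m xy by (simp add: mu_inv_monom_eq)
  have "mu_star (mu_inv_monom m) = Poly_Mapping.single m' 1 * (t4 a b * t5 c d)"
    using xy by (simp add: inv mu_star_eq_psubst psubst.hom_mult mu_star_prod_preimage psubst_single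
        subst_monom_fixed[OF m(4) mu_subst_Tvars_3])
  also have "\<dots> = Poly_Mapping.single m 1"
    by (simp add: m(1) xy PVar_def mult_single add.assoc)
  finally show "mu_star (mu_inv_monom m) = Poly_Mapping.single m 1" .
  have "homogeneous_in Zvars (0 + 1) (Poly_Mapping.single m' 1 * prod_preimage (a, b) (c, d))"
    using m(4) by (intro homogeneous_in_mult homogeneous_in_prod_preimage)
      (auto simp: deg_in_eq_0_iff Tvars_def Zvars_def)
  moreover have "poly_in (Tvars 3 \<union> Zvars) (Poly_Mapping.single m' 1 * prod_preimage (a, b) (c, d))"
    using m(4) by (intro poly_in_mult poly_in_mono[OF poly_in_prod_preimage]) auto
  ultimately show "mu_inv_monom m \<in> TZ_deg1"
    by (simp add: inv mem_TZ_deg1)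
qed

lemma mu_star_mu_inv:
  assumes "q \<in> T5_deg11"
  shows "mu_star (mu_inv q) = q"
proof -
  have "mu_star (mu_inv q) = lin_extend (\<lambda>m. mu_star (mu_inv_monom m)) q"
    by (simp add: mu_inv_def mu_star_eq_psubst psubst_eq_lin_extend lin_extend_lin_extend)
  also have "\<dots> = q"
    using assms by (intro lin_extend_eq_self mu_inv_monom_T5_deg11)
      (auto simp: mem_T5_deg11 poly_in_def homogeneous_in_def)
  finally show ?thesis .
qed

lemma mu_inv_T5_deg11:
  assumes "q \<in> T5_deg11"
  shows "mu_inv q \<in> TZ_deg1"
proof -
  have "mu_inv_monom m \<in> TZ_deg1" if "m \<in> Poly_Mapping.keys q" for m
    using that assms by (intro mu_inv_monom_T5_deg11) (auto simp: mem_T5_deg11 poly_in_def homogeneous_in_def)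
  then show ?thesis
    by (auto simp: mu_inv_def lin_extend_def mem_TZ_deg1
        intro!: poly_in_sum poly_in_mult homogeneous_in_sum homogeneous_in_PConst_mult)
qed

lemma bij_betw_mu_star: "bij_betw mu_star TZ_deg1 (T5_deg11 :: (var, 'k::field_char_0) mpoly set)"
  by (rule bij_betw_byWitness[where f' = mu_inv])
    (auto simp: mu_inv_mu_star mu_star_mu_inv mu_star_TZ_deg1 mu_inv_T5_deg11)

lemma bij_betw_mu_star_invariants:
  "bij_betw mu_star inv_TZ_deg1 (inv_T5_deg11 :: (var, 'k::field_char_0) mpoly set)"
proof -
  have "bij_betw mu_star {p \<in> TZ_deg1. \<forall>h\<in>SO3. so_act h p = p}
      {q \<in> T5_deg11. \<forall>h\<in>(SO3 :: 'k mat set). so_act h q = q}"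
    using bij_betw_mu_star
  proof (rule bij_betw_fixed_points)
    fix h :: "'k mat" and p :: "(var, 'k) mpoly"
    assume h: "h \<in> SO3" and p: "p \<in> TZ_deg1"
    then show "so_act h p \<in> TZ_deg1"
      by (simp add: SO3_def so_act_TZ_deg1)
    from h p show "mu_star (so_act h p) = so_act h (mu_star p)"
      by (simp add: mem_TZ_deg1 so_act_mu_star)
  qed
  then show ?thesis
    by (simp add: inv_TZ_deg1_eq inv_T5_deg11_eq so_invariant_def)
qed

theorem lemma3p1:
  shows "(\<forall>g\<in>(GL3 :: 'k::field_char_0 mat set). \<forall>p\<in>inv_TZ_deg1. gl_act g p \<in> (inv_TZ_deg1 :: (var,'k) mpoly set))
       \<and> (\<forall>g\<in>(GL3 :: 'k mat set). \<forall>p\<in>inv_T5_deg11. gl_act g p \<in> (inv_T5_deg11 :: (var,'k) mpoly set))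
       \<and> (\<forall>p\<in>inv_TZ_deg1. \<forall>q\<in>inv_TZ_deg1. \<forall>c::'k.
            mu_star (p + q) = mu_star p + mu_star q \<and> mu_star (PConst c * p) = PConst c * mu_star p)
       \<and> bij_betw (mu_star :: (var,'k) mpoly \<Rightarrow> _) inv_TZ_deg1 inv_T5_deg11
       \<and> (\<forall>g\<in>(GL3 :: 'k mat set). \<forall>p\<in>inv_TZ_deg1. mu_star (gl_act g p) = gl_act g (mu_star p))"
proof -
  have "mu_star (gl_act g p) = gl_act g (mu_star p)"
    if "p \<in> inv_TZ_deg1" for g :: "'k mat" and p :: "(var, 'k) mpoly"
    using that by (simp add: inv_TZ_deg1_eq mem_TZ_deg1 mu_star_gl_act)
  moreover have "mu_star (p + q) = mu_star p + mu_star q" "mu_star (PConst c * p) = PConst c * mu_star p"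
    for p q :: "(var, 'k) mpoly" and c
    by (simp_all add: mu_star_eq_psubst psubst.hom_add psubst.hom_mult)
  ultimately show ?thesis
    by (simp add: bij_betw_mu_star_invariants gl_act_inv_TZ_deg1 gl_act_inv_T5_deg11)
qed

end
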